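(* Let $L$ and $L'$ be finite sets with $|L|=n$ and $|L'|=m$, let $\mathcal U$ be a finite set of control inputs, and let $F:L\times\mathcal U\to L'$. Say that C-uniform control inputs exist between $L$ and $L'$ if there are numbers $p(x,u)\ge 0$ ($x\in L$, $u\in\mathcal U$) with $\sum_{u\in\mathcal U}p(x,u)=1$ for every $x\in L$ and $$\sum_{x\in L}\ \sum_{u\in\mathcal U:\ F(x,u)=x'} p(x,u)\cdot\frac{1}{n}=\frac{1}{m}\quad\text{for every } x'\in L'.$$ Construct the flow network with a source $s$, a sink $t$, one node for each element of $L$ and one node for each element of $L'$; an arc $s\to x$ of capacity $m$ for each $x\in L$; an arc $x\to x'$ of capacity $m$ for each pair $x\in L$, $x'\in L'$ such that $x'=F(x,u)$ for some $u\in\mathcal U$; and an arc $x'\to t$ of capacity $n$ for each $x'\in L'$. Then C-uniform control inputs exist between $L$ and $L'$ if and only if the maximum $s$–$t$ flow in this network has value $n\cdot m$.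
   Context: Here $L$ and $L'$ represent the tilings by small disjoint cells of two consecutive reachable level sets of a discrete-time system $x_{t+1}=F(x_t,u_t)$ (the level set $L_t$ being the set of states reachable from the initial state by some control sequence of length $t$), with each cell identified with a representative state, and the state distribution on $L$ assumed uniform. *)

theory Defs
  imports Complex_Main
begin

datatype ('a, 'b) fnode = Src | Snk | LN 'a | RN 'b

definition net_nodes :: "'a set \<Rightarrow> 'b set \<Rightarrow> ('a, 'b) fnode set" where
  "net_nodes L L' = {Src, Snk} \<union> LN ` L \<union> RN ` L'"

text \<open>Capacities (0 means: no arc).\<close>
definition net_cap :: "'a set \<Rightarrow> 'b set \<Rightarrow> 'c set \<Rightarrow> ('a \<Rightarrow> 'c \<Rightarrow> 'b)
    \<Rightarrow> ('a, 'b) fnode \<Rightarrow> ('a, 'b) fnode \<Rightarrow> real" where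
  "net_cap L L' U F v w = (case (v, w) of
      (Src, LN x) \<Rightarrow> (if x \<in> L then real (card L') else 0)
    | (LN x, RN x') \<Rightarrow> (if x \<in> L \<and> x' \<in> L' \<and> (\<exists>u\<in>U. x' = F x u) then real (card L') else 0)
    | (RN x', Snk) \<Rightarrow> (if x' \<in> L' then real (card L) else 0)
    | _ \<Rightarrow> 0)"

definition is_flow :: "'v set \<Rightarrow> ('v \<Rightarrow> 'v \<Rightarrow> real) \<Rightarrow> 'v \<Rightarrow> 'v \<Rightarrow> ('v \<Rightarrow> 'v \<Rightarrow> real) \<Rightarrow> bool" where
  "is_flow V c s t f \<longleftrightarrow>
     (\<forall>u v. 0 \<le> f u v \<and> f u v \<le> c u v) \<and>
     (\<forall>u v. (u \<notin> V \<or> v \<notin> V) \<longrightarrow> f u v = 0) \<and>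
     (\<forall>v \<in> V - {s, t}. (\<Sum>u\<in>V. f u v) = (\<Sum>w\<in>V. f v w))"

definition flow_value :: "'v set \<Rightarrow> 'v \<Rightarrow> ('v \<Rightarrow> 'v \<Rightarrow> real) \<Rightarrow> real" where
  "flow_value V s f = (\<Sum>w\<in>V. f s w) - (\<Sum>u\<in>V. f u s)"

definition max_flow_value :: "'v set \<Rightarrow> ('v \<Rightarrow> 'v \<Rightarrow> real) \<Rightarrow> 'v \<Rightarrow> 'v \<Rightarrow> real \<Rightarrow> bool" where
  "max_flow_value V c s t val \<longleftrightarrow>
     (\<exists>f. is_flow V c s t f \<and> flow_value V s f = val) \<and>
     (\<forall>f. is_flow V c s t f \<longrightarrow> flow_value V s f \<le> val)"

definition C_uniform :: "'a set \<Rightarrow> 'b set \<Rightarrow> 'c set \<Rightarrow> ('a \<Rightarrow> 'c \<Rightarrow> 'b) \<Rightarrow> bool" where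
  "C_uniform L L' U F \<longleftrightarrow>
     (\<exists>p :: 'a \<Rightarrow> 'c \<Rightarrow> real.
        (\<forall>x\<in>L. \<forall>u\<in>U. 0 \<le> p x u) \<and>
        (\<forall>x\<in>L. (\<Sum>u\<in>U. p x u) = 1) \<and>
        (\<forall>x'\<in>L'. (\<Sum>x\<in>L. \<Sum>u\<in>{u\<in>U. F x u = x'}. p x u * (1 / real (card L)))
                   = 1 / real (card L')))"

end

theory Submission
  imports Defs
begin

text \<open>Write \<open>n = card L\<close> and \<open>m = card L'\<close>. Both sides are equivalent to the existence
  of a nonnegative matrix \<open>g\<close> on \<open>L \<times> L'\<close>, supported on the pairs \<open>(x, F x u)\<close>, with row sums
  \<open>m\<close> and column sums \<open>n\<close>. From control probabilities \<open>p\<close> one takes \<open>g x y = m \<cdot> P(F x u = y)\<close>;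
  conversely \<open>p x u\<close> spreads \<open>g x (F x u) / m\<close> evenly over the fibre of \<open>F x\<close> through \<open>u\<close>.
  Such a \<open>g\<close> on the middle arcs, with all source and sink arcs saturated, is a flow of value
  \<open>n \<cdot> m\<close>, the total source capacity. Conversely, a flow of that value saturates every source arc,
  so its middle arcs have row sums \<open>m\<close>; their total \<open>n \<cdot> m\<close> then passes through \<open>m\<close> sink arcs
  of capacity \<open>n\<close>, which forces every column sum to be \<open>n\<close>.\<close>

lemma eq_const_if_sum_eq_card_mult:
  fixes h :: "'a \<Rightarrow> 'b::linordered_semidom"
  assumes "finite A" "\<forall>x\<in>A. h x \<le> c" "sum h A = of_nat (card A) * c" "x \<in> A"
  shows "h x = c"
proof (rule ccontr)
  assume "h x \<noteq> c"
  with assms(2,4) have "sum h A < sum (\<lambda>_. c) A"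
    by (intro sum_strict_mono_ex1[OF assms(1)]) (auto simp: order.order_iff_strict)
  with assms(3) show False by simp
qed

lemma sum_sum_fibres:
  assumes "finite U" "finite B" "F ` U \<subseteq> B"
  shows "(\<Sum>y\<in>B. \<Sum>u\<in>{u\<in>U. F u = y}. h u) = (\<Sum>u\<in>U. h u)"
  using sum.group[OF assms] by simp

lemma sum_fibre_divide_card_fibre:
  assumes "finite U" "m \<noteq> 0" "y \<notin> F ` U \<Longrightarrow> g y = 0"
  shows "(\<Sum>u\<in>{u\<in>U. F u = y}. g (F u) / (m * real (card {v\<in>U. F v = F u}))) = g y / m"
proof (cases "y \<in> F ` U")
  case True
  then have "card {u\<in>U. F u = y} \<noteq> 0"
    using assms(1) by auto
  then show ?thesis
    using assms(2) by simp
next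
  case False
  then show ?thesis
    using assms(3) by (auto intro!: sum.neutral)
qed

lemma flow_value_le_source_capacity:
  assumes "is_flow V c s t f"
  shows "flow_value V s f \<le> (\<Sum>w\<in>V. c s w)"
proof -
  have "(\<Sum>w\<in>V. f s w) \<le> (\<Sum>w\<in>V. c s w)" "0 \<le> (\<Sum>u\<in>V. f u s)"
    using assms unfolding is_flow_def by (auto intro: sum_mono sum_nonneg)
  then show ?thesis
    unfolding flow_value_def by linarith
qed

lemma flow_eq_0_if_cap_eq_0:
  assumes "is_flow V c s t f" "c u v = 0"
  shows "f u v = 0"
  using assms unfolding is_flow_def by (metis order.antisym)

lemma sum_net_nodes:
  assumes "finite L" "finite L'"
  shows "(\<Sum>v\<in>net_nodes L L'. g v) = g Src + g Snk + (\<Sum>x\<in>L. g (LN x)) + (\<Sum>y\<in>L'. g (RN y))"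
proof -
  have "net_nodes L L' = insert Src (insert Snk (LN ` L \<union> RN ` L'))"
    unfolding net_nodes_def by auto
  moreover have "(\<Sum>v\<in>LN ` L \<union> RN ` L'. g v) = (\<Sum>x\<in>L. g (LN x)) + (\<Sum>y\<in>L'. g (RN y))"
    using assms by (subst sum.union_disjoint) (auto simp: sum.reindex inj_on_def)
  ultimately show ?thesis
    using assms by (simp add: add.assoc image_iff)
qed

lemma net_cap_simps [simp]:
  "net_cap L L' U F Src (LN x) = (if x \<in> L then real (card L') else 0)"
  "net_cap L L' U F (LN x) (RN y) =
     (if x \<in> L \<and> y \<in> L' \<and> y \<in> F x ` U then real (card L') else 0)"
  "net_cap L L' U F (RN y) Snk = (if y \<in> L' then real (card L) else 0)"
  "net_cap L L' U F v Src = 0"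
  "net_cap L L' U F Snk v = 0"
  "net_cap L L' U F Src Snk = 0"
  "net_cap L L' U F Src (RN y) = 0"
  "net_cap L L' U F (LN x) (LN x') = 0"
  "net_cap L L' U F (LN x) Snk = 0"
  "net_cap L L' U F (RN y) (LN x) = 0"
  "net_cap L L' U F (RN y) (RN y') = 0"
  unfolding net_cap_def by (auto split: fnode.split)

lemma sum_net_cap_Src:
  assumes "finite L" "finite L'"
  shows "(\<Sum>w\<in>net_nodes L L'. net_cap L L' U F Src w) = real (card L) * real (card L')"
  using assms by (simp add: sum_net_nodes)

definition uniform_transport ::
    "'a set \<Rightarrow> 'b set \<Rightarrow> 'c set \<Rightarrow> ('a \<Rightarrow> 'c \<Rightarrow> 'b) \<Rightarrow> ('a \<Rightarrow> 'b \<Rightarrow> real) \<Rightarrow> bool" where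
  "uniform_transport L L' U F g \<longleftrightarrow>
     (\<forall>x\<in>L. \<forall>y\<in>L'. 0 \<le> g x y \<and> (y \<notin> F x ` U \<longrightarrow> g x y = 0)) \<and>
     (\<forall>x\<in>L. (\<Sum>y\<in>L'. g x y) = real (card L')) \<and>
     (\<forall>y\<in>L'. (\<Sum>x\<in>L. g x y) = real (card L))"

lemma uniform_transport_of_control_distribution:
  assumes "finite U" "finite L'" "L' \<noteq> {}" "\<forall>x\<in>L. F x ` U \<subseteq> L'"
    and "\<forall>x\<in>L. \<forall>u\<in>U. 0 \<le> p x u" "\<forall>x\<in>L. (\<Sum>u\<in>U. p x u) = 1"
    and "\<forall>y\<in>L'. (\<Sum>x\<in>L. \<Sum>u\<in>{u\<in>U. F x u = y}. p x u) = real (card L) / real (card L')"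
  shows "uniform_transport L L' U F (\<lambda>x y. real (card L') * (\<Sum>u\<in>{u\<in>U. F x u = y}. p x u))"
  unfolding uniform_transport_def
proof (intro conjI ballI impI)
  fix x y
  assume "x \<in> L"
  then show "0 \<le> real (card L') * (\<Sum>u\<in>{u\<in>U. F x u = y}. p x u)"
    using assms(5) by (auto intro!: mult_nonneg_nonneg sum_nonneg)
  assume "y \<notin> F x ` U"
  then show "real (card L') * (\<Sum>u\<in>{u\<in>U. F x u = y}. p x u) = 0"
    by (auto intro!: sum.neutral)
next
  fix x
  assume "x \<in> L"
  then show "(\<Sum>y\<in>L'. real (card L') * (\<Sum>u\<in>{u\<in>U. F x u = y}. p x u)) = real (card L')"
    using assms(1,2,4,6) by (simp add: sum_distrib_left[symmetric] sum_sum_fibres)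
next
  fix y
  assume "y \<in> L'"
  then show "(\<Sum>x\<in>L. real (card L') * (\<Sum>u\<in>{u\<in>U. F x u = y}. p x u)) = real (card L)"
    using assms(2,3,7) by (simp add: sum_distrib_left[symmetric])
qed

lemma C_uniform_iff_uniform_transport:
  assumes "finite L" "finite L'" "finite U" "L \<noteq> {}" "L' \<noteq> {}" "\<forall>x\<in>L. F x ` U \<subseteq> L'"
  shows "C_uniform L L' U F \<longleftrightarrow> (\<exists>g. uniform_transport L L' U F g)"
proof
  assume "C_uniform L L' U F"
  then obtain p where p: "\<forall>x\<in>L. \<forall>u\<in>U. 0 \<le> p x u" "\<forall>x\<in>L. (\<Sum>u\<in>U. p x u) = 1"
    and arrive: "\<forall>y\<in>L'. (\<Sum>x\<in>L. \<Sum>u\<in>{u\<in>U. F x u = y}. p x u * (1 / real (card L)))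
                          = 1 / real (card L')"
    unfolding C_uniform_def by blast
  have "\<forall>y\<in>L'. (\<Sum>x\<in>L. \<Sum>u\<in>{u\<in>U. F x u = y}. p x u) = real (card L) / real (card L')"
  proof
    fix y
    assume "y \<in> L'"
    with arrive have "(\<Sum>x\<in>L. \<Sum>u\<in>{u\<in>U. F x u = y}. p x u) * (1 / real (card L)) = 1 / real (card L')"
      by (simp only: sum_distrib_right)
    with assms(1,4) show "(\<Sum>x\<in>L. \<Sum>u\<in>{u\<in>U. F x u = y}. p x u) = real (card L) / real (card L')"
      by (simp add: field_simps)
  qed
  with assms p show "\<exists>g. uniform_transport L L' U F g"
    by (blast intro: uniform_transport_of_control_distribution)
next
  assume "\<exists>g. uniform_transport L L' U F g"
  then obtain g where g: "uniform_transport L L' U F g" ..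
  define m where "m = real (card L')"
  have "m \<noteq> 0"
    using assms(2,5) by (simp add: m_def)
  define p where "p x u = g x (F x u) / (m * real (card {v\<in>U. F x v = F x u}))" for x u
  have fibre: "(\<Sum>u\<in>{u\<in>U. F x u = y}. p x u) = g x y / m" if "x \<in> L" "y \<in> L'" for x y
    unfolding p_def using \<open>m \<noteq> 0\<close> g that assms(3)
    by (intro sum_fibre_divide_card_fibre) (auto simp: uniform_transport_def)
  show "C_uniform L L' U F"
    unfolding C_uniform_def
  proof (intro exI conjI ballI)
    fix x u
    assume "x \<in> L" "u \<in> U"
    then show "0 \<le> p x u"
      using g assms(6) unfolding p_def m_def uniform_transport_def
      by (auto intro!: divide_nonneg_nonneg)
  next
    fix x
    assume "x \<in> L"
    have "(\<Sum>u\<in>U. p x u) = (\<Sum>y\<in>L'. \<Sum>u\<in>{u\<in>U. F x u = y}. p x u)"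
      using assms(2,3,6) \<open>x \<in> L\<close> by (simp add: sum_sum_fibres)
    also have "\<dots> = (\<Sum>y\<in>L'. g x y) / m"
      using \<open>x \<in> L\<close> by (simp add: fibre sum_divide_distrib)
    finally show "(\<Sum>u\<in>U. p x u) = 1"
      using g \<open>x \<in> L\<close> \<open>m \<noteq> 0\<close> by (simp add: uniform_transport_def m_def)
  next
    fix y
    assume "y \<in> L'"
    have "(\<Sum>x\<in>L. \<Sum>u\<in>{u\<in>U. F x u = y}. p x u * (1 / real (card L)))
        = (\<Sum>x\<in>L. (\<Sum>u\<in>{u\<in>U. F x u = y}. p x u) * (1 / real (card L)))"
      by (simp only: sum_distrib_right)
    also have "\<dots> = (\<Sum>x\<in>L. g x y) / m / real (card L)"
      using \<open>y \<in> L'\<close> by (simp add: fibre sum_divide_distrib)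
    finally show "(\<Sum>x\<in>L. \<Sum>u\<in>{u\<in>U. F x u = y}. p x u * (1 / real (card L))) = 1 / real (card L')"
      using g \<open>y \<in> L'\<close> assms(1,4) by (simp add: uniform_transport_def m_def)
  qed
qed

definition transport_flow ::
    "'a set \<Rightarrow> 'b set \<Rightarrow> ('a \<Rightarrow> 'b \<Rightarrow> real) \<Rightarrow> ('a, 'b) fnode \<Rightarrow> ('a, 'b) fnode \<Rightarrow> real" where
  "transport_flow L L' g v w = (case (v, w) of
      (Src, LN x) \<Rightarrow> (if x \<in> L then real (card L') else 0)
    | (LN x, RN y) \<Rightarrow> (if x \<in> L \<and> y \<in> L' then g x y else 0)
    | (RN y, Snk) \<Rightarrow> (if y \<in> L' then real (card L) else 0)
    | _ \<Rightarrow> 0)"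

lemma transport_flow_simps [simp]:
  "transport_flow L L' g Src (LN x) = (if x \<in> L then real (card L') else 0)"
  "transport_flow L L' g (LN x) (RN y) = (if x \<in> L \<and> y \<in> L' then g x y else 0)"
  "transport_flow L L' g (RN y) Snk = (if y \<in> L' then real (card L) else 0)"
  "transport_flow L L' g v Src = 0"
  "transport_flow L L' g Snk v = 0"
  "transport_flow L L' g Src Snk = 0"
  "transport_flow L L' g Src (RN y) = 0"
  "transport_flow L L' g (LN x) (LN x') = 0"
  "transport_flow L L' g (LN x) Snk = 0"
  "transport_flow L L' g (RN y) (LN x) = 0"
  "transport_flow L L' g (RN y) (RN y') = 0"
  unfolding transport_flow_def by (auto split: fnode.split)

lemma is_flow_transport_flow:
  assumes "finite L" "finite L'" "uniform_transport L L' U F g"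
  shows "is_flow (net_nodes L L') (net_cap L L' U F) Src Snk (transport_flow L L' g)"
proof -
  have g: "\<forall>x\<in>L. \<forall>y\<in>L'. 0 \<le> g x y \<and> (y \<notin> F x ` U \<longrightarrow> g x y = 0)"
    "\<forall>x\<in>L. (\<Sum>y\<in>L'. g x y) = real (card L')" "\<forall>y\<in>L'. (\<Sum>x\<in>L. g x y) = real (card L)"
    using assms(3) unfolding uniform_transport_def by blast+
  have "g x y \<le> real (card L')" if "x \<in> L" "y \<in> L'" for x y
    using member_le_sum[of y L' "g x"] g(1,2) assms(2) that by auto
  with g(1) have cap: "0 \<le> transport_flow L L' g v w \<and> transport_flow L L' g v w \<le> net_cap L L' U F v w"
    for v w
    by (cases v; cases w) auto
  have "transport_flow L L' g v w = 0" if "v \<notin> net_nodes L L' \<or> w \<notin> net_nodes L L'" for v w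
    using that unfolding net_nodes_def by (cases v; cases w) auto
  moreover have "(\<Sum>u\<in>net_nodes L L'. transport_flow L L' g u v)
      = (\<Sum>w\<in>net_nodes L L'. transport_flow L L' g v w)" if "v \<in> net_nodes L L' - {Src, Snk}" for v
  proof -
    from that consider x where "v = LN x" "x \<in> L" | y where "v = RN y" "y \<in> L'"
      unfolding net_nodes_def by auto
    then show ?thesis
      using g(2,3) by cases (simp_all add: sum_net_nodes[OF assms(1,2)])
  qed
  ultimately show ?thesis
    unfolding is_flow_def using cap by blast
qed

lemma flow_value_transport_flow:
  assumes "finite L" "finite L'"
  shows "flow_value (net_nodes L L') Src (transport_flow L L' g) = real (card L) * real (card L')"
  using assms by (simp add: flow_value_def sum_net_nodes)

lemma uniform_transport_if_flow_value_eq: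
  assumes "finite L" "finite L'"
    and flow: "is_flow (net_nodes L L') (net_cap L L' U F) Src Snk f"
    and full: "flow_value (net_nodes L L') Src f = real (card L) * real (card L')"
  shows "uniform_transport L L' U F (\<lambda>x y. f (LN x) (RN y))"
proof -
  have nonneg: "0 \<le> f v w" and le_cap: "f v w \<le> net_cap L L' U F v w" for v w
    using flow unfolding is_flow_def by auto
  note off_arcs = flow_eq_0_if_cap_eq_0[OF flow]
  have conservation: "(\<Sum>u\<in>net_nodes L L'. f u v) = (\<Sum>w\<in>net_nodes L L'. f v w)"
    if "v \<in> net_nodes L L' - {Src, Snk}" for v
    using flow that unfolding is_flow_def by blast
  have "(\<Sum>x\<in>L. f Src (LN x)) = real (card L) * real (card L')"
    using full assms(1,2) by (simp add: flow_value_def sum_net_nodes off_arcs)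
  moreover have "\<forall>x\<in>L. f Src (LN x) \<le> real (card L')"
    using le_cap by (metis net_cap_simps(1))
  ultimately have source: "f Src (LN x) = real (card L')" if "x \<in> L" for x
    using eq_const_if_sum_eq_card_mult[OF assms(1), where h = "\<lambda>x. f Src (LN x)"] that by simp
  have rows: "(\<Sum>y\<in>L'. f (LN x) (RN y)) = real (card L')" if "x \<in> L" for x
  proof -
    have "LN x \<in> net_nodes L L' - {Src, Snk}"
      using that by (simp add: net_nodes_def)
    from conservation[OF this] show ?thesis
      using source[OF that] assms(1,2) by (simp add: sum_net_nodes off_arcs)
  qed
  have columns_le: "(\<Sum>x\<in>L. f (LN x) (RN y)) \<le> real (card L)" if "y \<in> L'" for y
  proof -
    have "RN y \<in> net_nodes L L' - {Src, Snk}"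
      using that by (simp add: net_nodes_def)
    from conservation[OF this] have "(\<Sum>x\<in>L. f (LN x) (RN y)) = f (RN y) Snk"
      using assms(1,2) by (simp add: sum_net_nodes off_arcs)
    also have "\<dots> \<le> real (card L)"
      using le_cap[of "RN y" Snk] that by simp
    finally show ?thesis .
  qed
  have "(\<Sum>x\<in>L. f (LN x) (RN y)) = real (card L)" if "y \<in> L'" for y
  proof -
    have "(\<Sum>y\<in>L'. \<Sum>x\<in>L. f (LN x) (RN y)) = (\<Sum>x\<in>L. \<Sum>y\<in>L'. f (LN x) (RN y))"
      by (rule sum.swap)
    also have "\<dots> = of_nat (card L') * real (card L)"
      using rows by simp
    finally show ?thesis
      using eq_const_if_sum_eq_card_mult[OF assms(2), where h = "\<lambda>y. \<Sum>x\<in>L. f (LN x) (RN y)"]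
        columns_le that by blast
  qed
  moreover have "f (LN x) (RN y) = 0" if "y \<notin> F x ` U" for x y
    using that by (simp add: off_arcs)
  ultimately show ?thesis
    unfolding uniform_transport_def using nonneg rows by blast
qed

lemma max_flow_value_iff_uniform_transport:
  assumes "finite L" "finite L'"
  shows "max_flow_value (net_nodes L L') (net_cap L L' U F) Src Snk (real (card L) * real (card L'))
    \<longleftrightarrow> (\<exists>g. uniform_transport L L' U F g)"
proof
  assume "max_flow_value (net_nodes L L') (net_cap L L' U F) Src Snk (real (card L) * real (card L'))"
  then show "\<exists>g. uniform_transport L L' U F g"
    unfolding max_flow_value_def using uniform_transport_if_flow_value_eq[OF assms] by blast
next
  assume "\<exists>g. uniform_transport L L' U F g"
  then obtain g where "uniform_transport L L' U F g" ..
  moreover have "flow_value (net_nodes L L') Src f \<le> real (card L) * real (card L')"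
    if "is_flow (net_nodes L L') (net_cap L L' U F) Src Snk f" for f
    using flow_value_le_source_capacity[OF that] unfolding sum_net_cap_Src[OF assms] .
  ultimately show "max_flow_value (net_nodes L L') (net_cap L L' U F) Src Snk (real (card L) * real (card L'))"
    unfolding max_flow_value_def
    using is_flow_transport_flow[OF assms] flow_value_transport_flow[OF assms] by blast
qed

theorem lemma1:
  fixes L :: "'a set" and L' :: "'b set" and U :: "'c set" and F :: "'a \<Rightarrow> 'c \<Rightarrow> 'b"
  assumes "finite L" and "finite L'" and "finite U"
    and "L \<noteq> {}" and "L' \<noteq> {}"
    and "\<forall>x\<in>L. \<forall>u\<in>U. F x u \<in> L'"
  shows "C_uniform L L' U F \<longleftrightarrow>
         max_flow_value (net_nodes L L') (net_cap L L' U F) Src Snk (real (card L) * real (card L'))"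
proof -
  have "\<forall>x\<in>L. F x ` U \<subseteq> L'"
    using assms(6) by blast
  with assms show ?thesis
    by (simp add: C_uniform_iff_uniform_transport max_flow_value_iff_uniform_transport)
qed

end
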